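(* For states $\mu,\nu:I\to X$ the relation $\mu\ll\nu$ is characterized as follows: (1) in $\mathrm{FinStoch}$, $\mu\ll\nu$ iff $\nu(x)=0$ implies $\mu(x)=0$ for all $x$; (2) in $\mathrm{BorelStoch}$, $\mu\ll\nu$ iff for all measurable $A$, $\nu(A)=0$ implies $\mu(A)=0$; (3) in $\mathrm{Gauss}$, $\mu\ll\nu$ iff $\mathrm{supp}(\mu)\subseteq\mathrm{supp}(\nu)$; (4) in $\mathrm{Rel}^+$, $R\ll S$ iff $R\subseteq S$.
   Context: A Markov category is a symmetric monoidal category with a compatible commutative comonoid $\mathrm{copy}_X:X\to X\otimes X$, $\mathrm{del}_X:X\to I$ on every object, with $I$ terminal. $\langle f,g\rangle=(f\otimes g)\mathrm{copy}_A$. For a state $\mu:I\to X$ and $f,g:X\to Y$, $f=_\mu g$ means $\langle\mathrm{id}_X,f\rangle\mu=\langle\mathrm{id}_X,g\rangle\mu$; $\mu\ll\nu$ means: for all $Y$ and all $f,g:X\to Y$, $f=_\nu g$ implies $f=_\mu g$. $\mathrm{FinStoch}$: finite sets with stochastic matrices, composition $(pq)(z|x)=\sum_y p(z|y)q(y|x)$, tensor cartesian product. $\mathrm{BorelStoch}$: standard Borel spaces and Markov kernels. $\mathrm{Gauss}$: objects $n\in\mathbb N$ (representing $\mathbb R^n$), $m\otimes n=m+n$; morphisms $m\to n$ are triples $(A,b,\Sigma)$ with $A\in\mathbb R^{n\times m}$, $b\in\mathbb R^n$, $\Sigma$ positive semidefinite $n\times n$ (representing $x\mapsto Ax+b+\mathcal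 N(0,\Sigma)$); $(A,b,\Sigma)\circ(C,d,\Xi)=(AC,Ad+b,A\Xi A^T+\Sigma)$; tensor block diagonal; copy $x\mapsto(x,x)$. A state $0\to n$ is a Gaussian $\mathcal N(b,\Sigma)$, whose support is the affine subspace $\mathrm{supp}=b+\mathrm{col}(\Sigma)$. $\mathrm{Rel}^+$: sets and left-total relations; states $I\to X$ are nonempty subsets of $X$. *)

theory Defs
  imports "HOL-Probability.Probability" "Jordan_Normal_Form.Matrix"
begin

text \<open>A morphism X -> Y of FinStoch (X, Y finite sets) is a stochastic matrix,
  represented as f :: 'a => 'b => real with f x y = p(y|x); only its values on
  X x Y are meaningful. States I -> X are morphisms from the one-point set {()}.\<close>

definition fs_morph :: "'a set \<Rightarrow> 'b set \<Rightarrow> ('a \<Rightarrow> 'b \<Rightarrow> real) \<Rightarrow> bool" where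
  "fs_morph X Y f \<longleftrightarrow> (\<forall>x\<in>X. \<forall>y\<in>Y. 0 \<le> f x y) \<and> (\<forall>x\<in>X. (\<Sum>y\<in>Y. f x y) = 1)"

definition fs_comp :: "'b set \<Rightarrow> ('b \<Rightarrow> 'c \<Rightarrow> real) \<Rightarrow> ('a \<Rightarrow> 'b \<Rightarrow> real) \<Rightarrow> ('a \<Rightarrow> 'c \<Rightarrow> real)" where
  "fs_comp Y g f = (\<lambda>x z. \<Sum>y\<in>Y. g y z * f x y)"

definition fs_tensor :: "('a \<Rightarrow> 'b \<Rightarrow> real) \<Rightarrow> ('c \<Rightarrow> 'd \<Rightarrow> real) \<Rightarrow> ('a \<times> 'c \<Rightarrow> 'b \<times> 'd \<Rightarrow> real)" where
  "fs_tensor f g = (\<lambda>(x, x') (y, y'). f x y * g x' y')"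

definition fs_id :: "'a \<Rightarrow> 'a \<Rightarrow> real" where
  "fs_id = (\<lambda>x y. if x = y then 1 else 0)"

definition fs_copy :: "'a \<Rightarrow> 'a \<times> 'a \<Rightarrow> real" where
  "fs_copy = (\<lambda>x (y1, y2). if y1 = x \<and> y2 = x then 1 else 0)"

definition fs_pair :: "'a set \<Rightarrow> ('a \<Rightarrow> 'b \<Rightarrow> real) \<Rightarrow> ('a \<Rightarrow> 'c \<Rightarrow> real) \<Rightarrow> ('a \<Rightarrow> 'b \<times> 'c \<Rightarrow> real)" where
  "fs_pair A f g = fs_comp (A \<times> A) (fs_tensor f g) fs_copy"

definition fs_ae_eq :: "'a set \<Rightarrow> 'b set \<Rightarrow> (unit \<Rightarrow> 'a \<Rightarrow> real) \<Rightarrow> ('a \<Rightarrow> 'b \<Rightarrow> real) \<Rightarrow> ('a \<Rightarrow> 'b \<Rightarrow> real) \<Rightarrow> bool" where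
  "fs_ae_eq X Y \<mu> f g \<longleftrightarrow>
     (\<forall>u\<in>{()}. \<forall>p\<in>X \<times> Y. fs_comp X (fs_pair X fs_id f) \<mu> u p = fs_comp X (fs_pair X fs_id g) \<mu> u p)"

text \<open>mu << nu. Objects Y range over finite subsets of nat (every finite set is
  isomorphic to one of these).\<close>
definition fs_ac :: "'a set \<Rightarrow> (unit \<Rightarrow> 'a \<Rightarrow> real) \<Rightarrow> (unit \<Rightarrow> 'a \<Rightarrow> real) \<Rightarrow> bool" where
  "fs_ac X \<mu> \<nu> \<longleftrightarrow> (\<forall>Y::nat set. finite Y \<longrightarrow> (\<forall>f g. fs_morph X Y f \<longrightarrow> fs_morph X Y g \<longrightarrow>
       fs_ae_eq X Y \<nu> f g \<longrightarrow> fs_ae_eq X Y \<mu> f g))"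

definition standard_borel :: "'a measure \<Rightarrow> bool" where
  "standard_borel M \<longleftrightarrow> (\<exists>T. completely_metrizable_space T \<and> separable_space T \<and>
      topspace T = space M \<and> sets M = sigma_sets (space M) {U. openin T U})"

definition bs_morph :: "'a measure \<Rightarrow> 'b measure \<Rightarrow> ('a \<Rightarrow> 'b measure) \<Rightarrow> bool" where
  "bs_morph X Y f \<longleftrightarrow> f \<in> X \<rightarrow>\<^sub>M prob_algebra Y"

definition bs_state :: "'a measure \<Rightarrow> 'a measure \<Rightarrow> bool" where
  "bs_state X \<mu> \<longleftrightarrow> \<mu> \<in> space (prob_algebra X)"

definition bs_comp :: "('b \<Rightarrow> 'c measure) \<Rightarrow> ('a \<Rightarrow> 'b measure) \<Rightarrow> ('a \<Rightarrow> 'c measure)" where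
  "bs_comp g f = (\<lambda>x. f x \<bind> g)"

definition bs_tensor :: "('a \<Rightarrow> 'b measure) \<Rightarrow> ('c \<Rightarrow> 'd measure) \<Rightarrow> ('a \<times> 'c \<Rightarrow> ('b \<times> 'd) measure)" where
  "bs_tensor f g = (\<lambda>(x, x'). f x \<Otimes>\<^sub>M g x')"

definition bs_id :: "'a measure \<Rightarrow> 'a \<Rightarrow> 'a measure" where
  "bs_id X = return X"

definition bs_copy :: "'a measure \<Rightarrow> 'a \<Rightarrow> ('a \<times> 'a) measure" where
  "bs_copy X = (\<lambda>x. return (X \<Otimes>\<^sub>M X) (x, x))"

definition bs_pair :: "'a measure \<Rightarrow> ('a \<Rightarrow> 'b measure) \<Rightarrow> ('a \<Rightarrow> 'c measure) \<Rightarrow> ('a \<Rightarrow> ('b \<times> 'c) measure)" where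
  "bs_pair A f g = bs_comp (bs_tensor f g) (bs_copy A)"

definition bs_ae_eq :: "'a measure \<Rightarrow> 'a measure \<Rightarrow> ('a \<Rightarrow> 'b measure) \<Rightarrow> ('a \<Rightarrow> 'b measure) \<Rightarrow> bool" where
  "bs_ae_eq X \<mu> f g \<longleftrightarrow> (\<mu> \<bind> bs_pair X (bs_id X) f) = (\<mu> \<bind> bs_pair X (bs_id X) g)"

text \<open>Objects Y range over standard Borel spaces carried by subsets of the reals
  (every standard Borel space is isomorphic to one of these).\<close>
definition bs_ac :: "'a measure \<Rightarrow> 'a measure \<Rightarrow> 'a measure \<Rightarrow> bool" where
  "bs_ac X \<mu> \<nu> \<longleftrightarrow> (\<forall>Y::real measure. standard_borel Y \<longrightarrow> (\<forall>f g. bs_morph X Y f \<longrightarrow> bs_morph X Y g \<longrightarrow>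
       bs_ae_eq X \<nu> f g \<longrightarrow> bs_ae_eq X \<mu> f g))"

type_synonym gmor = "real mat \<times> real vec \<times> real mat"

definition psd_mat :: "nat \<Rightarrow> real mat \<Rightarrow> bool" where
  "psd_mat n S \<longleftrightarrow> S \<in> carrier_mat n n \<and> transpose_mat S = S \<and>
     (\<forall>v\<in>carrier_vec n. 0 \<le> v \<bullet> (S *\<^sub>v v))"

text \<open>(A,b,Sigma) : m -> n, representing x |-> A x + b + N(0,Sigma)\<close>
definition g_morph :: "nat \<Rightarrow> nat \<Rightarrow> gmor \<Rightarrow> bool" where
  "g_morph m n f \<longleftrightarrow> (case f of (A, b, S) \<Rightarrow> A \<in> carrier_mat n m \<and> b \<in> carrier_vec n \<and> psd_mat n S)"

definition g_comp :: "gmor \<Rightarrow> gmor \<Rightarrow> gmor" where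
  "g_comp f g = (case f of (A, b, S) \<Rightarrow> case g of (C, d, X) \<Rightarrow>
     (A * C, A *\<^sub>v d + b, A * X * transpose_mat A + S))"

definition g_tensor :: "nat \<Rightarrow> nat \<Rightarrow> nat \<Rightarrow> nat \<Rightarrow> gmor \<Rightarrow> gmor \<Rightarrow> gmor" where
  "g_tensor m n m' n' f g = (case f of (A, b, S) \<Rightarrow> case g of (A', b', S') \<Rightarrow>
     (four_block_mat A (0\<^sub>m n m') (0\<^sub>m n' m) A', b @\<^sub>v b', four_block_mat S (0\<^sub>m n n') (0\<^sub>m n' n) S'))"

definition g_id :: "nat \<Rightarrow> gmor" where
  "g_id n = (1\<^sub>m n, 0\<^sub>v n, 0\<^sub>m n n)"

definition g_copy :: "nat \<Rightarrow> gmor" where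
  "g_copy n = (mat (n + n) n (\<lambda>(i, j). if i = j \<or> i = j + n then 1 else 0), 0\<^sub>v (n + n), 0\<^sub>m (n + n) (n + n))"

definition g_pair :: "nat \<Rightarrow> nat \<Rightarrow> nat \<Rightarrow> gmor \<Rightarrow> gmor \<Rightarrow> gmor" where
  "g_pair a n n' f g = g_comp (g_tensor a n a n' f g) (g_copy a)"

definition g_ae_eq :: "nat \<Rightarrow> nat \<Rightarrow> gmor \<Rightarrow> gmor \<Rightarrow> gmor \<Rightarrow> bool" where
  "g_ae_eq x y \<mu> f g \<longleftrightarrow> g_comp (g_pair x x y (g_id x) f) \<mu> = g_comp (g_pair x x y (g_id x) g) \<mu>"

definition g_ac :: "nat \<Rightarrow> gmor \<Rightarrow> gmor \<Rightarrow> bool" where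
  "g_ac x \<mu> \<nu> \<longleftrightarrow> (\<forall>y f g. g_morph x y f \<longrightarrow> g_morph x y g \<longrightarrow> g_ae_eq x y \<nu> f g \<longrightarrow> g_ae_eq x y \<mu> f g)"

definition g_supp :: "nat \<Rightarrow> gmor \<Rightarrow> real vec set" where
  "g_supp n \<mu> = (case \<mu> of (A, b, S) \<Rightarrow> {b + S *\<^sub>v v | v. v \<in> carrier_vec n})"

definition rp_morph :: "'a set \<Rightarrow> 'b set \<Rightarrow> ('a \<times> 'b) set \<Rightarrow> bool" where
  "rp_morph X Y R \<longleftrightarrow> R \<subseteq> X \<times> Y \<and> (\<forall>x\<in>X. \<exists>y. (x, y) \<in> R)"

text \<open>states I -> X are nonempty subsets of X; as relations {()} -> X\<close>
definition rp_state_rel :: "'a set \<Rightarrow> (unit \<times> 'a) set" where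
  "rp_state_rel S = {()} \<times> S"

text \<open>g o f is relational composition f O g\<close>
definition rp_tensor :: "('a \<times> 'b) set \<Rightarrow> ('c \<times> 'd) set \<Rightarrow> (('a \<times> 'c) \<times> ('b \<times> 'd)) set" where
  "rp_tensor R S = {((x, x'), (y, y')) | x x' y y'. (x, y) \<in> R \<and> (x', y') \<in> S}"

definition rp_copy :: "'a set \<Rightarrow> ('a \<times> ('a \<times> 'a)) set" where
  "rp_copy X = {(x, (x, x)) | x. x \<in> X}"

definition rp_pair :: "'a set \<Rightarrow> ('a \<times> 'b) set \<Rightarrow> ('a \<times> 'c) set \<Rightarrow> ('a \<times> ('b \<times> 'c)) set" where
  "rp_pair A R S = rp_copy A O rp_tensor R S"

definition rp_ae_eq :: "'a set \<Rightarrow> 'a set \<Rightarrow> ('a \<times> 'b) set \<Rightarrow> ('a \<times> 'b) set \<Rightarrow> bool" where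
  "rp_ae_eq X M R S \<longleftrightarrow> rp_state_rel M O rp_pair X (Id_on X) R = rp_state_rel M O rp_pair X (Id_on X) S"

text \<open>Objects Y range over subsets of the same universe type as X.\<close>
definition rp_ac :: "'a set \<Rightarrow> 'a set \<Rightarrow> 'a set \<Rightarrow> bool" where
  "rp_ac X M N \<longleftrightarrow> (\<forall>Y::'a set. \<forall>R S. rp_morph X Y R \<longrightarrow> rp_morph X Y S \<longrightarrow>
       rp_ae_eq X N R S \<longrightarrow> rp_ae_eq X M R S)"

end

theory Submission
  imports Defs
begin

text \<open>In all four categories, \<open>f =\<^sub>\<mu> g\<close> unwinds to "\<open>f\<close> and \<open>g\<close> agree where \<open>\<mu>\<close> lives":
  at the points of positive mass (FinStoch), \<open>\<mu>\<close>-almost everywhere (BorelStoch), on the affine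
  support together with equal noise (Gauss), and on the subset \<open>\<mu>\<close> itself (Rel+). Hence the
  condition on the right implies \<open>\<mu> \<ll> \<nu>\<close>; in BorelStoch this goes through the
  Radon--Nikodym density of \<open>\<mu>\<close> with respect to \<open>\<nu>\<close>. Conversely, a failure of the
  condition is witnessed by a pair of deterministic maps that agree off a point, a \<open>\<nu>\<close>-null set,
  or (Gauss) a hyperplane through \<open>supp \<nu>\<close> missing a point of \<open>supp \<mu>\<close>.\<close>

no_notation Inner_Product.inner (infix "\<bullet>" 70)
no_notation Finite_Cartesian_Product.vec_nth (infixl "$" 90)

section \<open>Rel+\<close>

lemma rp_ae_eq_iff_agree_on:
  assumes "M \<subseteq> X"
  shows "rp_ae_eq X M R S \<longleftrightarrow> (\<forall>x\<in>M. \<forall>y. (x, y) \<in> R \<longleftrightarrow> (x, y) \<in> S)"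
proof -
  have joint: "rp_state_rel M O rp_pair X (Id_on X) T = {((), (x, y)) | x y. x \<in> M \<and> (x, y) \<in> T}"
    for T :: "('a \<times> 'b) set"
    using assms unfolding rp_state_rel_def rp_pair_def rp_copy_def rp_tensor_def
    by (auto simp: relcomp_unfold)
  show ?thesis unfolding rp_ae_eq_def joint by blast
qed

lemma rp_ae_eq_mono:
  assumes "M \<subseteq> N" and "N \<subseteq> X" and "rp_ae_eq X N R S"
  shows "rp_ae_eq X M R S"
  using assms by (auto simp: rp_ae_eq_iff_agree_on)

lemma rp_ac_iff_subset:
  assumes "R \<subseteq> X" and "S \<noteq> {}" and "S \<subseteq> X"
  shows "rp_ac X R S \<longleftrightarrow> R \<subseteq> S"
proof
  assume "R \<subseteq> S"
  then show "rp_ac X R S"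
    unfolding rp_ac_def using rp_ae_eq_mono[OF _ assms(3)] by blast
next
  assume ac: "rp_ac X R S"
  show "R \<subseteq> S"
  proof
    fix m assume m: "m \<in> R"
    obtain s where s: "s \<in> S" using assms by blast
    have morphs: "rp_morph X X (Id_on X)" "rp_morph X X (insert (m, s) (Id_on X))"
      unfolding rp_morph_def using assms m s by auto
    show "m \<in> S"
    proof (rule ccontr)
      assume "m \<notin> S"
      then have "rp_ae_eq X S (Id_on X) (insert (m, s) (Id_on X))"
        using assms by (subst rp_ae_eq_iff_agree_on) auto
      then have "rp_ae_eq X R (Id_on X) (insert (m, s) (Id_on X))"
        using ac morphs unfolding rp_ac_def by blast
      then show False
        using assms m s \<open>m \<notin> S\<close> by (subst (asm) rp_ae_eq_iff_agree_on) auto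
    qed
  qed
qed

section \<open>FinStoch\<close>

lemma fs_comp_pair_id_apply:
  assumes "finite X" and "x' \<in> X"
  shows "fs_comp X (fs_pair X fs_id f) \<mu> u (x', y) = f x' y * \<mu> u x'"
proof -
  have pair: "fs_pair X fs_id f x (x', y) = (if x = x' then f x y else 0)" if x: "x \<in> X" for x
  proof -
    have "fs_pair X fs_id f x (x', y) = (\<Sum>p\<in>X \<times> X. if p = (x, x) then fs_id x x' * f x y else 0)"
      unfolding fs_pair_def fs_comp_def
      by (rule sum.cong) (auto simp: fs_tensor_def fs_copy_def split: if_splits)
    also have "\<dots> = fs_id x x' * f x y" using x assms by simp
    finally show ?thesis by (simp add: fs_id_def)
  qed
  have "fs_comp X (fs_pair X fs_id f) \<mu> u (x', y) = (\<Sum>x\<in>X. if x = x' then f x y * \<mu> u x else 0)"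
    unfolding fs_comp_def by (rule sum.cong) (auto simp: pair)
  also have "\<dots> = f x' y * \<mu> u x'" using assms by (simp add: sum.delta')
  finally show ?thesis .
qed

lemma fs_ae_eq_iff:
  assumes "finite X"
  shows "fs_ae_eq X Y \<mu> f g \<longleftrightarrow> (\<forall>x\<in>X. \<forall>y\<in>Y. f x y * \<mu> () x = g x y * \<mu> () x)"
  unfolding fs_ae_eq_def by (simp add: fs_comp_pair_id_apply[OF assms])

lemma fs_ac_iff_zero_imp_zero:
  assumes X: "finite X"
  shows "fs_ac X \<mu> \<nu> \<longleftrightarrow> (\<forall>x\<in>X. \<nu> () x = 0 \<longrightarrow> \<mu> () x = 0)"
proof
  assume null: "\<forall>x\<in>X. \<nu> () x = 0 \<longrightarrow> \<mu> () x = 0"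
  have "a * \<mu> () x = b * \<mu> () x" if "a * \<nu> () x = b * \<nu> () x" and "x \<in> X" for a b :: real and x
    using that null by (cases "\<nu> () x = 0") simp_all
  then show "fs_ac X \<mu> \<nu>"
    unfolding fs_ac_def fs_ae_eq_iff[OF X] by blast
next
  assume ac: "fs_ac X \<mu> \<nu>"
  show "\<forall>x\<in>X. \<nu> () x = 0 \<longrightarrow> \<mu> () x = 0"
  proof (intro ballI impI)
    fix x0 assume x0: "x0 \<in> X" "\<nu> () x0 = 0"
    define f :: "'a \<Rightarrow> nat \<Rightarrow> real" where "f = (\<lambda>x y. if y = 0 then 1 else 0)"
    define g :: "'a \<Rightarrow> nat \<Rightarrow> real" where "g = (\<lambda>x y. if x = x0 then (if y = 1 then 1 else 0) else f x y)"
    have morphs: "fs_morph X {0, 1} f" "fs_morph X {0, 1} g" unfolding fs_morph_def f_def g_def by auto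
    have "fs_ae_eq X {0, 1} \<nu> f g" unfolding fs_ae_eq_iff[OF X] using x0 by (auto simp: g_def)
    then have "fs_ae_eq X {0, 1} \<mu> f g" using ac[unfolded fs_ac_def, rule_format, OF _ morphs] by simp
    then have "f x0 0 * \<mu> () x0 = g x0 0 * \<mu> () x0" unfolding fs_ae_eq_iff[OF X] using x0 by blast
    then show "\<mu> () x0 = 0" by (simp add: f_def g_def)
  qed
qed

section \<open>BorelStoch\<close>

definition graph_kernel :: "'a measure \<Rightarrow> ('a \<Rightarrow> 'b measure) \<Rightarrow> 'a \<Rightarrow> ('a \<times> 'b) measure" where
  "graph_kernel X f x = return X x \<Otimes>\<^sub>M f x"

lemma measurable_graph_kernel:
  assumes "f \<in> X \<rightarrow>\<^sub>M subprob_algebra Y"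
  shows "graph_kernel X f \<in> X \<rightarrow>\<^sub>M subprob_algebra (X \<Otimes>\<^sub>M Y)"
  unfolding graph_kernel_def[abs_def] by (rule measurable_pair_measure[OF return_measurable assms])

lemma bs_pair_id_eq_graph_kernel:
  assumes f: "f \<in> X \<rightarrow>\<^sub>M subprob_algebra Y" and x: "x \<in> space X"
  shows "bs_pair X (bs_id X) f x = graph_kernel X f x"
proof -
  have "(\<lambda>z. return X (fst z) \<Otimes>\<^sub>M f (snd z)) \<in> X \<Otimes>\<^sub>M X \<rightarrow>\<^sub>M subprob_algebra (X \<Otimes>\<^sub>M Y)"
    by (intro measurable_pair_measure measurable_compose[OF measurable_fst return_measurable]
        measurable_compose[OF measurable_snd f])
  then have "bs_tensor (return X) f \<in> X \<Otimes>\<^sub>M X \<rightarrow>\<^sub>M subprob_algebra (X \<Otimes>\<^sub>M Y)"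
    unfolding bs_tensor_def by (simp add: case_prod_beta')
  then show ?thesis
    unfolding bs_pair_def bs_comp_def bs_copy_def bs_id_def graph_kernel_def
    by (subst bind_return) (auto simp: space_pair_measure x bs_tensor_def)
qed

lemma bind_bs_pair_id_eq_graph_kernel:
  assumes "sets \<mu> = sets X" and "f \<in> X \<rightarrow>\<^sub>M subprob_algebra Y"
  shows "\<mu> \<bind> bs_pair X (bs_id X) f = \<mu> \<bind> graph_kernel X f"
  using assms sets_eq_imp_space_eq[OF assms(1)]
  by (intro bind_cong refl) (simp add: bs_pair_id_eq_graph_kernel)

lemma nn_integral_graph_kernel:
  assumes f: "f \<in> X \<rightarrow>\<^sub>M subprob_algebra Y" and x: "x \<in> space X"
    and F: "F \<in> borel_measurable (X \<Otimes>\<^sub>M Y)"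
  shows "(\<integral>\<^sup>+z. F z \<partial>graph_kernel X f x) = (\<integral>\<^sup>+y. F (x, y) \<partial>f x)"
proof -
  interpret sigma_finite_measure "f x"
    using subprob_space_imp_sigma_finite[OF subprob_space_kernel[OF f x]] .
  have sets_fx: "sets (f x) = sets Y" using sets_kernel[OF f x] .
  have F1: "F \<in> borel_measurable (return X x \<Otimes>\<^sub>M f x)"
    using F by (simp add: measurable_cong_sets[OF sets_pair_measure_cong[OF sets_return sets_fx] refl])
  have F2: "F \<in> borel_measurable (X \<Otimes>\<^sub>M f x)"
    using F by (simp add: measurable_cong_sets[OF sets_pair_measure_cong[OF refl sets_fx] refl])
  have "(\<integral>\<^sup>+z. F z \<partial>graph_kernel X f x) = (\<integral>\<^sup>+a. \<integral>\<^sup>+b. F (a, b) \<partial>f x \<partial>return X x)"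
    unfolding graph_kernel_def by (rule nn_integral_fst[OF F1, symmetric])
  also have "\<dots> = (\<integral>\<^sup>+b. F (x, b) \<partial>f x)"
    by (rule nn_integral_return[OF x borel_measurable_nn_integral_fst[OF F2]])
  finally show ?thesis .
qed

lemma emeasure_graph_kernel_density:
  assumes f: "f \<in> X \<rightarrow>\<^sub>M subprob_algebra Y" and x: "x \<in> space X"
    and h: "h \<in> borel_measurable X" and C: "C \<in> sets (X \<Otimes>\<^sub>M Y)"
  shows "(\<integral>\<^sup>+z. h (fst z) * indicator C z \<partial>graph_kernel X f x) = h x * emeasure (graph_kernel X f x) C"
proof -
  have "(\<lambda>z. h (fst z) * indicator C z) \<in> borel_measurable (X \<Otimes>\<^sub>M Y)" using h C by measurable
  then have "(\<integral>\<^sup>+z. h (fst z) * indicator C z \<partial>graph_kernel X f x) = (\<integral>\<^sup>+y. h x * indicator C (x, y) \<partial>f x)"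
    by (simp add: nn_integral_graph_kernel[OF f x])
  also have "\<dots> = h x * (\<integral>\<^sup>+y. indicator C (x, y) \<partial>f x)"
  proof (rule nn_integral_cmult)
    have "(\<lambda>y. indicator C (x, y)) \<in> borel_measurable Y" using C x by measurable
    then show "(\<lambda>y. indicator C (x, y)) \<in> borel_measurable (f x)"
      by (simp add: measurable_cong_sets[OF sets_kernel[OF f x] refl])
  qed
  also have "(\<integral>\<^sup>+y. indicator C (x, y) \<partial>f x) = (\<integral>\<^sup>+z. indicator C z \<partial>graph_kernel X f x)"
    using nn_integral_graph_kernel[OF f x, of "indicator C"] C by simp
  also have "\<dots> = emeasure (graph_kernel X f x) C"
    using C sets_kernel[OF measurable_graph_kernel[OF f] x] by simp
  finally show ?thesis .
qed

lemma bind_density_graph_kernel: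
  assumes \<nu>: "prob_space \<nu>" "sets \<nu> = sets X"
    and h: "h \<in> borel_measurable X" and f: "f \<in> X \<rightarrow>\<^sub>M subprob_algebra Y"
  shows "density \<nu> h \<bind> graph_kernel X f = density (\<nu> \<bind> graph_kernel X f) (\<lambda>z. h (fst z))"
proof -
  have space: "space \<nu> = space X" using \<nu>(2) by (rule sets_eq_imp_space_eq)
  have ne: "space \<nu> \<noteq> {}" using prob_space.not_empty[OF \<nu>(1)] .
  have K: "graph_kernel X f \<in> \<nu> \<rightarrow>\<^sub>M subprob_algebra (X \<Otimes>\<^sub>M Y)"
    using measurable_graph_kernel[OF f] by (simp add: measurable_cong_sets[OF \<nu>(2) refl])
  have K': "graph_kernel X f \<in> density \<nu> h \<rightarrow>\<^sub>M subprob_algebra (X \<Otimes>\<^sub>M Y)"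
    using K by (simp add: measurable_cong_sets[OF sets_density refl])
  have h\<nu>: "h \<in> borel_measurable \<nu>" using h by (simp add: measurable_cong_sets[OF \<nu>(2) refl])
  have sets1: "sets (density \<nu> h \<bind> graph_kernel X f) = sets (X \<Otimes>\<^sub>M Y)"
    by (rule sets_bind[OF sets_kernel[OF K']]) (use ne in simp_all)
  have sets2: "sets (\<nu> \<bind> graph_kernel X f) = sets (X \<Otimes>\<^sub>M Y)"
    by (rule sets_bind[OF sets_kernel[OF K] ne])
  have hfst: "(\<lambda>z. h (fst z)) \<in> borel_measurable (X \<Otimes>\<^sub>M Y)" using h by measurable
  show ?thesis
  proof (rule measure_eqI)
    show "sets (density \<nu> h \<bind> graph_kernel X f) = sets (density (\<nu> \<bind> graph_kernel X f) (\<lambda>z. h (fst z)))"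
      using sets1 sets2 by simp
    fix C assume "C \<in> sets (density \<nu> h \<bind> graph_kernel X f)"
    then have C: "C \<in> sets (X \<Otimes>\<^sub>M Y)" using sets1 by simp
    have "emeasure (density \<nu> h \<bind> graph_kernel X f) C
        = (\<integral>\<^sup>+x. emeasure (graph_kernel X f x) C \<partial>density \<nu> h)"
      by (rule emeasure_bind[OF _ K' C]) (use ne in simp)
    also have "\<dots> = (\<integral>\<^sup>+x. h x * emeasure (graph_kernel X f x) C \<partial>\<nu>)"
      by (rule nn_integral_density[OF h\<nu>]) (use K C in measurable)
    also have "\<dots> = (\<integral>\<^sup>+x. \<integral>\<^sup>+z. h (fst z) * indicator C z \<partial>graph_kernel X f x \<partial>\<nu>)"
      by (rule nn_integral_cong) (simp add: emeasure_graph_kernel_density[OF f _ h C] space)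
    also have "\<dots> = (\<integral>\<^sup>+z. h (fst z) * indicator C z \<partial>(\<nu> \<bind> graph_kernel X f))"
      by (rule nn_integral_bind[OF _ K, symmetric]) (use hfst C in measurable)
    also have "\<dots> = emeasure (density (\<nu> \<bind> graph_kernel X f) (\<lambda>z. h (fst z))) C"
      by (rule emeasure_density[symmetric])
        (use hfst C sets2 in \<open>simp_all add: measurable_cong_sets[OF sets2 refl]\<close>)
    finally show "emeasure (density \<nu> h \<bind> graph_kernel X f) C
        = emeasure (density (\<nu> \<bind> graph_kernel X f) (\<lambda>z. h (fst z))) C" .
  qed
qed

lemma bs_ac_if_absolutely_continuous:
  assumes \<mu>: "bs_state X \<mu>" and \<nu>: "bs_state X \<nu>" and ac: "absolutely_continuous \<nu> \<mu>"
  shows "bs_ac X \<mu> \<nu>"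
proof -
  have sets: "sets \<mu> = sets X" "sets \<nu> = sets X" and prob: "prob_space \<mu>" "prob_space \<nu>"
    using \<mu> \<nu> by (auto simp: bs_state_def space_prob_algebra)
  interpret sigma_finite_measure \<nu> using prob_space_imp_sigma_finite[OF prob(2)] .
  obtain h where "h \<in> borel_measurable \<nu>" and \<mu>_eq: "density \<nu> h = \<mu>"
    using Radon_Nikodym[OF ac] sets by auto
  then have h: "h \<in> borel_measurable X" by (simp add: measurable_cong_sets[OF sets(2) refl])
  show ?thesis
    unfolding bs_ac_def
  proof (intro allI impI)
    fix Y :: "real measure" and f g
    assume "bs_morph X Y f" "bs_morph X Y g" and eq\<nu>: "bs_ae_eq X \<nu> f g"
    then have f: "f \<in> X \<rightarrow>\<^sub>M subprob_algebra Y" and g: "g \<in> X \<rightarrow>\<^sub>M subprob_algebra Y"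
      by (auto simp: bs_morph_def intro: measurable_prob_algebraD)
    note graph = bind_bs_pair_id_eq_graph_kernel[OF _ f] bind_bs_pair_id_eq_graph_kernel[OF _ g]
    have "\<nu> \<bind> graph_kernel X f = \<nu> \<bind> graph_kernel X g"
      using eq\<nu> unfolding bs_ae_eq_def graph[OF sets(2)] .
    then have "\<mu> \<bind> graph_kernel X f = \<mu> \<bind> graph_kernel X g"
      unfolding \<mu>_eq[symmetric] bind_density_graph_kernel[OF prob(2) sets(2) h f]
        bind_density_graph_kernel[OF prob(2) sets(2) h g] by simp
    then show "bs_ae_eq X \<mu> f g"
      unfolding bs_ae_eq_def graph[OF sets(1)] .
  qed
qed

lemma standard_borel_real: "standard_borel (borel :: real measure)"
  unfolding standard_borel_def
proof (intro exI[of _ euclideanreal] conjI)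
  show "completely_metrizable_space euclideanreal" by (rule completely_metrizable_space_euclidean)
  show "separable_space euclideanreal"
    unfolding separable_space_def by (intro exI[of _ "\<rat>"]) (auto simp: countable_rat Rats_closure_real)
qed (auto simp: sets_borel)

abbreviation indicator_kernel :: "'a set \<Rightarrow> 'a \<Rightarrow> real measure" where
  "indicator_kernel A x \<equiv> return borel (indicator A x)"

lemma indicator_kernel_measurable:
  assumes "A \<in> sets X"
  shows "indicator_kernel A \<in> X \<rightarrow>\<^sub>M prob_algebra borel"
  by (rule measurable_compose[OF _ measurable_return_prob_space]) (use assms in measurable)

lemma emeasure_bind_indicator_kernel:
  assumes \<mu>: "prob_space \<mu>" "sets \<mu> = sets X" and A: "A \<in> sets X"
  shows "emeasure (\<mu> \<bind> graph_kernel X (indicator_kernel A)) (space X \<times> {1}) = emeasure \<mu> A"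
proof -
  have K: "graph_kernel X (indicator_kernel A) \<in> \<mu> \<rightarrow>\<^sub>M subprob_algebra (X \<Otimes>\<^sub>M borel)"
    using measurable_graph_kernel[OF measurable_prob_algebraD[OF indicator_kernel_measurable[OF A]]]
    by (simp add: measurable_cong_sets[OF \<mu>(2) refl])
  have space: "space \<mu> = space X" using sets_eq_imp_space_eq[OF \<mu>(2)] .
  have point: "emeasure (graph_kernel X (indicator_kernel A) x) (space X \<times> {1}) = indicator A x"
    if "x \<in> space X" for x
  proof -
    interpret sigma_finite_measure "indicator_kernel A x"
      by (rule prob_space_imp_sigma_finite[OF prob_space_return]) simp
    have "emeasure (graph_kernel X (indicator_kernel A) x) (space X \<times> {1}) = indicator {1} (indicator A x :: real)"
      using that unfolding graph_kernel_def by (subst emeasure_pair_measure_Times) auto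
    then show ?thesis by (simp add: indicator_def)
  qed
  have "emeasure (\<mu> \<bind> graph_kernel X (indicator_kernel A)) (space X \<times> {1})
      = (\<integral>\<^sup>+x. emeasure (graph_kernel X (indicator_kernel A) x) (space X \<times> {1}) \<partial>\<mu>)"
    by (rule emeasure_bind[OF prob_space.not_empty[OF \<mu>(1)] K]) auto
  also have "\<dots> = (\<integral>\<^sup>+x. indicator A x \<partial>\<mu>)"
    by (rule nn_integral_cong) (simp add: point space)
  also have "\<dots> = emeasure \<mu> A" using A \<mu>(2) by simp
  finally show ?thesis .
qed

text \<open>Test \<open>\<ll>\<close> against the indicator of a \<open>\<nu>\<close>-null set \<open>A\<close> and the constant \<open>0\<close>
  (the indicator of \<open>{}\<close>): they agree \<open>\<nu>\<close>-a.e., and the joint states under \<open>\<mu>\<close> weigh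
  \<open>space X \<times> {1}\<close> by \<open>\<mu> A\<close> and \<open>0\<close>.\<close>

lemma null_set_if_bs_ac:
  assumes \<mu>: "bs_state X \<mu>" and \<nu>: "bs_state X \<nu>" and ac: "bs_ac X \<mu> \<nu>"
    and A: "A \<in> sets X" and null: "emeasure \<nu> A = 0"
  shows "emeasure \<mu> A = 0"
proof -
  have sets: "sets \<mu> = sets X" "sets \<nu> = sets X" and prob: "prob_space \<mu>" "prob_space \<nu>"
    using \<mu> \<nu> by (auto simp: bs_state_def space_prob_algebra)
  note kernels = indicator_kernel_measurable[OF sets.empty_sets] indicator_kernel_measurable[OF A]
  note graph = bind_bs_pair_id_eq_graph_kernel[OF _ measurable_prob_algebraD[OF kernels(1)]]
    bind_bs_pair_id_eq_graph_kernel[OF _ measurable_prob_algebraD[OF kernels(2)]]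
  have "AE x in \<nu>. x \<notin> A" using A null sets by (intro AE_not_in) (simp add: null_sets_def)
  then have "AE x in \<nu>. graph_kernel X (indicator_kernel {}) x = graph_kernel X (indicator_kernel A) x"
    by (rule eventually_mono) (simp add: graph_kernel_def)
  then have "\<nu> \<bind> graph_kernel X (indicator_kernel {}) = \<nu> \<bind> graph_kernel X (indicator_kernel A)"
    by (intro bind_cong_AE[OF refl]) (use measurable_graph_kernel[OF measurable_prob_algebraD[OF kernels(1)]]
      measurable_graph_kernel[OF measurable_prob_algebraD[OF kernels(2)]] sets(2) in
      \<open>simp_all add: measurable_cong_sets[OF sets(2) refl]\<close>)
  then have "bs_ae_eq X \<nu> (indicator_kernel {}) (indicator_kernel A)"
    unfolding bs_ae_eq_def graph[OF sets(2)] .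
  then have "bs_ae_eq X \<mu> (indicator_kernel {}) (indicator_kernel A)"
    using ac standard_borel_real kernels unfolding bs_ac_def bs_morph_def by blast
  then have "\<mu> \<bind> graph_kernel X (indicator_kernel {}) = \<mu> \<bind> graph_kernel X (indicator_kernel A)"
    unfolding bs_ae_eq_def graph[OF sets(1)] .
  then show ?thesis
    using emeasure_bind_indicator_kernel[OF prob(1) sets(1)] A by (metis emeasure_empty sets.empty_sets)
qed

lemma bs_ac_iff_null_sets:
  assumes "bs_state X \<mu>" and "bs_state X \<nu>"
  shows "bs_ac X \<mu> \<nu> \<longleftrightarrow> (\<forall>A\<in>sets X. emeasure \<nu> A = 0 \<longrightarrow> emeasure \<mu> A = 0)"
proof
  assume "\<forall>A\<in>sets X. emeasure \<nu> A = 0 \<longrightarrow> emeasure \<mu> A = 0"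
  moreover have "sets \<mu> = sets X" "sets \<nu> = sets X"
    using assms by (auto simp: bs_state_def space_prob_algebra)
  ultimately have "absolutely_continuous \<nu> \<mu>"
    unfolding absolutely_continuous_def null_sets_def by auto
  then show "bs_ac X \<mu> \<nu>" using assms by (rule bs_ac_if_absolutely_continuous[rotated 2])
qed (use assms null_set_if_bs_ac in blast)

section \<open>Gauss\<close>

lemma scalar_prod_self_eq_0_iff:
  fixes v :: "real vec"
  assumes "v \<in> carrier_vec n"
  shows "v \<bullet> v = 0 \<longleftrightarrow> v = 0\<^sub>v n"
  using conjugate_square_eq_0_vec[OF assms] by simp

lemma scalar_prod_diff_add:
  fixes r c d :: "'a :: comm_ring vec"
  assumes "r \<in> carrier_vec n" and "c \<in> carrier_vec n" and "d \<in> carrier_vec n"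
  shows "r \<bullet> c = r \<bullet> (c - d) + r \<bullet> d"
proof -
  have "c = (c - d) + d" using assms by (intro eq_vecI) auto
  then have "r \<bullet> c = r \<bullet> ((c - d) + d)" by simp
  also have "\<dots> = r \<bullet> (c - d) + r \<bullet> d" using assms by (intro scalar_prod_add_distrib[of _ n]) auto
  finally show ?thesis .
qed

fun lin_span :: "nat \<Rightarrow> real vec list \<Rightarrow> real vec set" where
  "lin_span n [] = {0\<^sub>v n}"
| "lin_span n (c # cs) = {a \<cdot>\<^sub>v c + u | a u. u \<in> lin_span n cs}"

lemma lin_span_carrier: "set cs \<subseteq> carrier_vec n \<Longrightarrow> u \<in> lin_span n cs \<Longrightarrow> u \<in> carrier_vec n"
  by (induction cs arbitrary: u) auto

lemma lin_span_orthogonal: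
  assumes "set cs \<subseteq> carrier_vec n" and "r \<in> carrier_vec n" and "\<forall>c\<in>set cs. r \<bullet> c = 0"
    and "u \<in> lin_span n cs"
  shows "r \<bullet> u = 0"
  using assms
proof (induction cs arbitrary: u)
  case (Cons c cs)
  then obtain a v where u: "u = a \<cdot>\<^sub>v c + v" and v: "v \<in> lin_span n cs" by auto
  have "v \<in> carrier_vec n" using lin_span_carrier[OF _ v] Cons.prems by auto
  then have "r \<bullet> u = r \<bullet> (a \<cdot>\<^sub>v c) + r \<bullet> v"
    unfolding u using Cons.prems by (intro scalar_prod_add_distrib[of _ n]) auto
  also have "\<dots> = 0" using Cons v by simp
  finally show ?case .
qed simp

lemma lin_span_add_smult:
  assumes "set cs \<subseteq> carrier_vec n" and "u \<in> lin_span n cs" and "u' \<in> lin_span n cs"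
  shows "u + \<beta> \<cdot>\<^sub>v u' \<in> lin_span n cs"
  using assms
proof (induction cs arbitrary: u u')
  case Nil
  then show ?case by (auto intro!: eq_vecI)
next
  case (Cons c cs)
  then obtain a v a' v' where u: "u = a \<cdot>\<^sub>v c + v" and v: "v \<in> lin_span n cs"
    and u': "u' = a' \<cdot>\<^sub>v c + v'" and v': "v' \<in> lin_span n cs" by auto
  have "v \<in> carrier_vec n" "v' \<in> carrier_vec n" "c \<in> carrier_vec n"
    using lin_span_carrier[OF _ v] lin_span_carrier[OF _ v'] Cons.prems by auto
  then have "u + \<beta> \<cdot>\<^sub>v u' = (a + \<beta> * a') \<cdot>\<^sub>v c + (v + \<beta> \<cdot>\<^sub>v v')"
    unfolding u u' by (intro eq_vecI) (auto simp: algebra_simps)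
  moreover have "v + \<beta> \<cdot>\<^sub>v v' \<in> lin_span n cs" using Cons v v' by auto
  ultimately show ?case by auto
qed

text \<open>Gram--Schmidt step: project \<open>w\<close> and the new vector \<open>c\<close> onto the span of \<open>cs\<close>
  and remove from the residual of \<open>w\<close> its component along the residual of \<open>c\<close>.\<close>

lemma orthogonal_decomposition:
  assumes "set cs \<subseteq> carrier_vec n" and "w \<in> carrier_vec n"
  shows "\<exists>r\<in>carrier_vec n. (\<forall>c\<in>set cs. r \<bullet> c = 0) \<and> w - r \<in> lin_span n cs"
  using assms
proof (induction cs arbitrary: w)
  case Nil
  then show ?case by (intro bexI[of _ w]) (auto intro!: eq_vecI)
next
  case (Cons c cs)
  have cs: "set cs \<subseteq> carrier_vec n" and c: "c \<in> carrier_vec n" and w: "w \<in> carrier_vec n"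
    using Cons.prems by auto
  obtain rw where rw: "rw \<in> carrier_vec n" "\<forall>c\<in>set cs. rw \<bullet> c = 0" "w - rw \<in> lin_span n cs"
    using Cons.IH[OF cs w] by blast
  obtain rc where rc: "rc \<in> carrier_vec n" "\<forall>c\<in>set cs. rc \<bullet> c = 0" "c - rc \<in> lin_span n cs"
    using Cons.IH[OF cs c] by blast
  define \<alpha> where "\<alpha> = (rw \<bullet> rc) / (rc \<bullet> rc)"
  define r where "r = rw - \<alpha> \<cdot>\<^sub>v rc"
  have r: "r \<in> carrier_vec n" using rw rc unfolding r_def by auto
  have r_prod: "r \<bullet> v = rw \<bullet> v - \<alpha> * (rc \<bullet> v)" if "v \<in> carrier_vec n" for v
    unfolding r_def using that rw(1) rc(1) by (subst minus_scalar_prod_distrib) auto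
  have orth: "\<forall>c'\<in>set cs. r \<bullet> c' = 0" using r_prod rw(2) rc(2) cs by auto
  \<comment> \<open>If \<open>rc \<bullet> rc = 0\<close> then \<open>rc = 0\<close>, and \<open>\<alpha> = 0\<close> by the convention \<open>x / 0 = 0\<close>.\<close>
  have "r \<bullet> rc = 0"
  proof (cases "rc \<bullet> rc = 0")
    case True
    then have "rc = 0\<^sub>v n" using scalar_prod_self_eq_0_iff[OF rc(1)] by simp
    then show ?thesis using r_prod[OF rc(1)] rw(1) by simp
  qed (simp add: r_prod[OF rc(1)] \<alpha>_def)
  moreover have "r \<bullet> (c - rc) = 0" by (rule lin_span_orthogonal[OF cs r orth rc(3)])
  ultimately have "r \<bullet> c = 0" using scalar_prod_diff_add[OF r c rc(1)] by simp
  moreover have "w - r = \<alpha> \<cdot>\<^sub>v c + ((w - rw) + (- \<alpha>) \<cdot>\<^sub>v (c - rc))"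
    unfolding r_def using w rw(1) rc(1) c by (intro eq_vecI) (auto simp: algebra_simps)
  moreover have "(w - rw) + (- \<alpha>) \<cdot>\<^sub>v (c - rc) \<in> lin_span n cs"
    by (rule lin_span_add_smult[OF cs rw(3) rc(3)])
  ultimately show ?case using r orth by (intro bexI[of _ r]) auto
qed

lemma lin_span_cols_subset_range:
  fixes S :: "real mat"
  assumes S: "S \<in> carrier_mat n m" and "set js \<subseteq> {..<m}" and "u \<in> lin_span n (map (col S) js)"
  shows "\<exists>v\<in>carrier_vec m. u = S *\<^sub>v v"
  using assms(2,3)
proof (induction js arbitrary: u)
  case Nil
  then show ?case using S by (intro bexI[of _ "0\<^sub>v m"]) (auto intro!: eq_vecI)
next
  case (Cons j js)
  then obtain a u' where u: "u = a \<cdot>\<^sub>v col S j + u'" and u': "u' \<in> lin_span n (map (col S) js)" by auto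
  obtain v' where v': "v' \<in> carrier_vec m" "u' = S *\<^sub>v v'" using Cons u' by auto
  have "j < m" using Cons by auto
  then have "u = S *\<^sub>v (a \<cdot>\<^sub>v unit_vec m j + v')"
    unfolding u v'(2) using S v'(1)
    by (intro eq_vecI) (auto simp: scalar_prod_add_distrib[of _ m] algebra_simps)
  then show ?case using v'(1) by auto
qed

text \<open>The functional is the residual of \<open>w\<close> after orthogonal projection onto the column space.\<close>

lemma separating_functional_outside_range:
  fixes S :: "real mat"
  assumes S: "S \<in> carrier_mat n m" and w: "w \<in> carrier_vec n"
    and outside: "\<forall>v\<in>carrier_vec m. w \<noteq> S *\<^sub>v v"
  shows "\<exists>d\<in>carrier_vec n. (\<forall>u\<in>carrier_vec m. d \<bullet> (S *\<^sub>v u) = 0) \<and> d \<bullet> w \<noteq> 0"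
proof -
  let ?cs = "map (col S) [0..<m]"
  have "set ?cs \<subseteq> carrier_vec n" using S by auto
  then obtain r where r: "r \<in> carrier_vec n" "\<forall>c\<in>set ?cs. r \<bullet> c = 0" "w - r \<in> lin_span n ?cs"
    using orthogonal_decomposition[OF _ w] by blast
  have "transpose_mat S *\<^sub>v r = 0\<^sub>v m"
  proof (rule eq_vecI)
    fix i assume "i < dim_vec (0\<^sub>v m :: real vec)"
    then have i: "i < m" by simp
    then have "col S i \<bullet> r = 0" using r(2) comm_scalar_prod[of r n "col S i"] r(1) S by auto
    then show "(transpose_mat S *\<^sub>v r) $ i = 0\<^sub>v m $ i" using i S by simp
  qed (use S in simp)
  then have orth: "r \<bullet> (S *\<^sub>v u) = 0" if "u \<in> carrier_vec m" for u
    using transpose_vec_mult_scalar[OF S that r(1)] that by simp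
  obtain v where v: "v \<in> carrier_vec m" "w - r = S *\<^sub>v v"
    using lin_span_cols_subset_range[OF S _ r(3)] by (auto simp: atLeast0LessThan)
  have "r \<noteq> 0\<^sub>v n"
  proof
    assume "r = 0\<^sub>v n"
    then have "w = S *\<^sub>v v" using v w by (metis minus_zero_vec)
    then show False using outside v by auto
  qed
  then have "r \<bullet> r \<noteq> 0" using scalar_prod_self_eq_0_iff[OF r(1)] by simp
  moreover have "r \<bullet> w = r \<bullet> (w - r) + r \<bullet> r" using scalar_prod_diff_add[OF r(1) w r(1)] .
  ultimately show ?thesis using r(1) orth v by (intro bexI[of _ r]) auto
qed

lemma four_block_mat_eq_iff:
  assumes "A \<in> carrier_mat ra ca" "A' \<in> carrier_mat ra ca" "B \<in> carrier_mat ra cb" "B' \<in> carrier_mat ra cb"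
    "C \<in> carrier_mat rb ca" "C' \<in> carrier_mat rb ca" "D \<in> carrier_mat rb cb" "D' \<in> carrier_mat rb cb"
  shows "four_block_mat A B C D = four_block_mat A' B' C' D' \<longleftrightarrow> A = A' \<and> B = B' \<and> C = C' \<and> D = D'"
proof
  assume "four_block_mat A B C D = four_block_mat A' B' C' D'"
  then have entry: "four_block_mat A B C D $$ (i, j) = four_block_mat A' B' C' D' $$ (i, j)" for i j
    by simp
  have "A = A'"
  proof (rule eq_matI)
    fix i j assume "i < dim_row A'" "j < dim_col A'"
    then show "A $$ (i, j) = A' $$ (i, j)" using entry[of i j] assms by auto
  qed (use assms in auto)
  moreover have "B = B'"
  proof (rule eq_matI)
    fix i j assume "i < dim_row B'" "j < dim_col B'"
    then show "B $$ (i, j) = B' $$ (i, j)" using entry[of i "j + ca"] assms by auto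
  qed (use assms in auto)
  moreover have "C = C'"
  proof (rule eq_matI)
    fix i j assume "i < dim_row C'" "j < dim_col C'"
    then show "C $$ (i, j) = C' $$ (i, j)" using entry[of "i + ra" j] assms by auto
  qed (use assms in auto)
  moreover have "D = D'"
  proof (rule eq_matI)
    fix i j assume "i < dim_row D'" "j < dim_col D'"
    then show "D $$ (i, j) = D' $$ (i, j)" using entry[of "i + ra" "j + ca"] assms by auto
  qed (use assms in auto)
  ultimately show "A = A' \<and> B = B' \<and> C = C' \<and> D = D'" by simp
qed simp

lemma add_mat_left_cancel_iff:
  fixes X Y Z :: "'a :: cancel_semigroup_add mat"
  assumes "X \<in> carrier_mat m n" and "Y \<in> carrier_mat m n" and "Z \<in> carrier_mat m n"
  shows "X + Y = X + Z \<longleftrightarrow> Y = Z"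
proof
  assume eq: "X + Y = X + Z"
  show "Y = Z"
  proof (rule eq_matI)
    fix i j assume "i < dim_row Z" "j < dim_col Z"
    then show "Y $$ (i, j) = Z $$ (i, j)"
      using arg_cong[OF eq, of "\<lambda>M. M $$ (i, j)"] assms by simp
  qed (use assms in auto)
qed simp

lemma mat_eq_if_mult_vec_eq:
  fixes P Q :: "'a :: comm_ring_1 mat"
  assumes P: "P \<in> carrier_mat m n" and Q: "Q \<in> carrier_mat m n"
    and eq: "\<And>v. v \<in> carrier_vec n \<Longrightarrow> P *\<^sub>v v = Q *\<^sub>v v"
  shows "P = Q"
proof (rule eq_matI)
  fix i j assume "i < dim_row Q" "j < dim_col Q"
  moreover have "(P *\<^sub>v unit_vec n j) $ i = (Q *\<^sub>v unit_vec n j) $ i" using eq by simp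
  ultimately show "P $$ (i, j) = Q $$ (i, j)" using P Q by simp
qed (use P Q in auto)

lemma mult_sym_mult_transpose_eq:
  fixes F G S :: "'a :: comm_ring mat"
  assumes F: "F \<in> carrier_mat m n" and G: "G \<in> carrier_mat m n" and S: "S \<in> carrier_mat n n"
    and sym: "transpose_mat S = S" and eq: "F * S = G * S"
  shows "F * S * transpose_mat F = G * S * transpose_mat G"
proof -
  have tr: "S * transpose_mat H = transpose_mat (H * S)" if "H \<in> carrier_mat m n" for H
    using transpose_mult[OF that S] sym by simp
  have "F * S * transpose_mat F = G * (S * transpose_mat F)"
    using eq F G S by (simp add: assoc_mult_mat[of _ m n _ n _ m])
  also have "\<dots> = G * (S * transpose_mat G)" using tr[OF F] tr[OF G] eq by simp
  also have "\<dots> = G * S * transpose_mat G" using G S by (simp add: assoc_mult_mat[of _ m n _ n _ m])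
  finally show ?thesis .
qed

lemma g_pair_id:
  fixes Af Sf :: "real mat" and bf :: "real vec"
  assumes Af: "Af \<in> carrier_mat y n" and bf: "bf \<in> carrier_vec y" and Sf: "Sf \<in> carrier_mat y y"
  shows "g_pair n n y (g_id n) (Af, bf, Sf) =
    (four_block_mat (1\<^sub>m n) (0\<^sub>m n 0) Af (0\<^sub>m y 0), 0\<^sub>v n @\<^sub>v bf, four_block_mat (0\<^sub>m n n) (0\<^sub>m n y) (0\<^sub>m y n) Sf)"
proof -
  let ?T = "four_block_mat (1\<^sub>m n) (0\<^sub>m n n) (0\<^sub>m y n) Af"
  have T: "?T \<in> carrier_mat (n + y) (n + n)" using Af by auto
  have copy: "mat (n + n) n (\<lambda>(i, j). if i = j \<or> i = j + n then 1 else 0)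
      = four_block_mat (1\<^sub>m n) (0\<^sub>m n 0) (1\<^sub>m n) (0\<^sub>m n 0 :: real mat)"
    by (rule eq_matI) auto
  have "?T * four_block_mat (1\<^sub>m n) (0\<^sub>m n 0) (1\<^sub>m n) (0\<^sub>m n 0) = four_block_mat (1\<^sub>m n) (0\<^sub>m n 0) Af (0\<^sub>m y 0)"
    by (subst mult_four_block_mat[of _ n n _ n _ y _ _ n _ 0]) (use Af in auto)
  moreover have "?T *\<^sub>v 0\<^sub>v (n + n) + (0\<^sub>v n @\<^sub>v bf) = 0\<^sub>v n @\<^sub>v bf"
    using T bf by (intro eq_vecI) (auto simp: mult_mat_vec_def scalar_prod_def)
  moreover have "?T * 0\<^sub>m (n + n) (n + n) * transpose_mat ?T = 0\<^sub>m (n + y) (n + y)"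
    using T by (simp add: right_mult_zero_mat[OF T] left_mult_zero_mat)
  ultimately show ?thesis
    using Sf unfolding g_pair_def g_tensor_def g_id_def g_copy_def g_comp_def copy by simp
qed

lemma g_comp_pair_id_state:
  fixes Af Sf A S :: "real mat" and bf b :: "real vec"
  assumes Af: "Af \<in> carrier_mat y n" and bf: "bf \<in> carrier_vec y" and Sf: "Sf \<in> carrier_mat y y"
    and b: "b \<in> carrier_vec n" and S: "S \<in> carrier_mat n n"
  shows "g_comp (g_pair n n y (g_id n) (Af, bf, Sf)) (A, b, S) =
    (four_block_mat (1\<^sub>m n) (0\<^sub>m n 0) Af (0\<^sub>m y 0) * A, b @\<^sub>v (Af *\<^sub>v b + bf),
     four_block_mat S (S * transpose_mat Af) (Af * S) (Af * S * transpose_mat Af + Sf))"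
proof -
  let ?L = "four_block_mat (1\<^sub>m n) (0\<^sub>m n 0) Af (0\<^sub>m y 0)"
  have "?L = 1\<^sub>m n @\<^sub>r Af" unfolding append_rows_def using Af by simp
  then have "?L *\<^sub>v b = b @\<^sub>v (Af *\<^sub>v b)"
    using Af b by (simp add: mat_mult_append[of _ n n _ y])
  then have mean: "?L *\<^sub>v b + (0\<^sub>v n @\<^sub>v bf) = b @\<^sub>v (Af *\<^sub>v b + bf)"
    using Af b bf by (simp add: append_vec_add[of _ n _ _ y])
  have "?L * S = ?L * four_block_mat S (0\<^sub>m n 0) (0\<^sub>m 0 n) (0\<^sub>m 0 0)"
    using S by (intro arg_cong[where f="\<lambda>M. ?L * M"] eq_matI) auto
  also have "\<dots> = four_block_mat S (0\<^sub>m n 0) (Af * S) (0\<^sub>m y 0)"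
    by (subst mult_four_block_mat[of _ n n _ 0 _ y _ _ n _ 0]) (use Af S in auto)
  finally have LS: "?L * S = four_block_mat S (0\<^sub>m n 0) (Af * S) (0\<^sub>m y 0)" .
  have LT: "transpose_mat ?L = four_block_mat (1\<^sub>m n) (transpose_mat Af) (0\<^sub>m 0 n) (0\<^sub>m 0 y)"
    by (subst transpose_four_block_mat[of _ n n _ 0 _ y]) (use Af in auto)
  have LSL: "?L * S * transpose_mat ?L
      = four_block_mat S (S * transpose_mat Af) (Af * S) (Af * S * transpose_mat Af)"
    unfolding LS LT by (subst mult_four_block_mat[of _ n n _ 0 _ y _ _ n _ y]) (use Af S in auto)
  have cov: "?L * S * transpose_mat ?L + four_block_mat (0\<^sub>m n n) (0\<^sub>m n y) (0\<^sub>m y n) Sf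
      = four_block_mat S (S * transpose_mat Af) (Af * S) (Af * S * transpose_mat Af + Sf)"
    unfolding LSL by (subst add_four_block_mat[of _ n n _ y _ y]) (use Af S Sf in auto)
  show ?thesis
    unfolding g_pair_id[OF Af bf Sf] g_comp_def using mean cov by simp
qed

lemma g_ae_eq_iff_params:
  fixes Af Ag Sf Sg A S :: "real mat" and bf bg b :: "real vec"
  assumes Af: "Af \<in> carrier_mat y n" and bf: "bf \<in> carrier_vec y" and Sf: "Sf \<in> carrier_mat y y"
    and Ag: "Ag \<in> carrier_mat y n" and bg: "bg \<in> carrier_vec y" and Sg: "Sg \<in> carrier_mat y y"
    and A: "A \<in> carrier_mat n 0" and b: "b \<in> carrier_vec n" and S: "S \<in> carrier_mat n n"
    and sym: "transpose_mat S = S"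
  shows "g_ae_eq n y (A, b, S) (Af, bf, Sf) (Ag, bg, Sg) \<longleftrightarrow>
     Af *\<^sub>v b + bf = Ag *\<^sub>v b + bg \<and> Af * S = Ag * S \<and> Sf = Sg"
proof -
  have blocks: "four_block_mat S (S * transpose_mat Af) (Af * S) (Af * S * transpose_mat Af + Sf) =
        four_block_mat S (S * transpose_mat Ag) (Ag * S) (Ag * S * transpose_mat Ag + Sg)
    \<longleftrightarrow> S * transpose_mat Af = S * transpose_mat Ag \<and> Af * S = Ag * S
      \<and> Af * S * transpose_mat Af + Sf = Ag * S * transpose_mat Ag + Sg"
    by (subst four_block_mat_eq_iff[where ra=n and ca=n and cb=y and rb=y]) (use Af Ag S Sf Sg in auto)
  have "S * transpose_mat Af = S * transpose_mat Ag" if "Af * S = Ag * S"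
    using transpose_mult[OF Af S] transpose_mult[OF Ag S] sym that by simp
  moreover have "Af * S * transpose_mat Af + Sf = Ag * S * transpose_mat Ag + Sg \<longleftrightarrow> Sf = Sg"
    if "Af * S = Ag * S"
    unfolding mult_sym_mult_transpose_eq[OF Af Ag S sym that]
    by (rule add_mat_left_cancel_iff[OF _ Sf Sg]) (use Ag S in auto)
  moreover have "b @\<^sub>v (Af *\<^sub>v b + bf) = b @\<^sub>v (Ag *\<^sub>v b + bg) \<longleftrightarrow> Af *\<^sub>v b + bf = Ag *\<^sub>v b + bg"
    using append_vec_eq[OF b b] by simp
  moreover have "four_block_mat (1\<^sub>m n) (0\<^sub>m n 0) Af (0\<^sub>m y 0) * A
      = four_block_mat (1\<^sub>m n) (0\<^sub>m n 0) Ag (0\<^sub>m y 0) * A"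
    using Af Ag A by (intro eq_matI) auto
  ultimately show ?thesis
    unfolding g_ae_eq_def g_comp_pair_id_state[OF Af bf Sf b S] g_comp_pair_id_state[OF Ag bg Sg b S]
      prod.inject blocks by auto
qed

lemma mult_mat_vec_zero:
  fixes A :: "'a :: comm_semiring_0 mat"
  assumes "A \<in> carrier_mat m n"
  shows "A *\<^sub>v 0\<^sub>v n = 0\<^sub>v m"
  using assms by (intro eq_vecI) auto

lemma affine_map_at_translate:
  fixes F S :: "real mat" and c b v :: "real vec"
  assumes F: "F \<in> carrier_mat y n" and c: "c \<in> carrier_vec y" and b: "b \<in> carrier_vec n"
    and S: "S \<in> carrier_mat n n" and v: "v \<in> carrier_vec n"
  shows "F *\<^sub>v (b + S *\<^sub>v v) + c = (F *\<^sub>v b + c) + (F * S) *\<^sub>v v"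
proof -
  have "F *\<^sub>v (b + S *\<^sub>v v) = F *\<^sub>v b + (F * S) *\<^sub>v v"
    using F b S v by (simp add: mult_add_distrib_mat_vec[of _ y n])
  then show ?thesis using F c b S v by (intro eq_vecI) auto
qed

lemma affine_maps_agree_on_g_supp_iff:
  fixes Af Ag S A :: "real mat" and bf bg b :: "real vec"
  assumes Af: "Af \<in> carrier_mat y n" and bf: "bf \<in> carrier_vec y"
    and Ag: "Ag \<in> carrier_mat y n" and bg: "bg \<in> carrier_vec y"
    and b: "b \<in> carrier_vec n" and S: "S \<in> carrier_mat n n"
  shows "(\<forall>w\<in>g_supp n (A, b, S). Af *\<^sub>v w + bf = Ag *\<^sub>v w + bg) \<longleftrightarrow>
     Af *\<^sub>v b + bf = Ag *\<^sub>v b + bg \<and> Af * S = Ag * S"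
proof
  assume agree: "\<forall>w\<in>g_supp n (A, b, S). Af *\<^sub>v w + bf = Ag *\<^sub>v w + bg"
  have on_S: "(Af *\<^sub>v b + bf) + (Af * S) *\<^sub>v v = (Ag *\<^sub>v b + bg) + (Ag * S) *\<^sub>v v"
    if v: "v \<in> carrier_vec n" for v
    using agree v unfolding g_supp_def
    by (auto simp: affine_map_at_translate[OF Af bf b S v, symmetric]
        affine_map_at_translate[OF Ag bg b S v, symmetric])
  have mean: "Af *\<^sub>v b + bf = Ag *\<^sub>v b + bg"
    using on_S[of "0\<^sub>v n"] Af bf Ag bg b S by (simp add: mult_mat_vec_zero)
  have "Af * S = Ag * S"
  proof (rule mat_eq_if_mult_vec_eq)
    fix v :: "real vec" assume v: "v \<in> carrier_vec n"
    show "Af * S *\<^sub>v v = Ag * S *\<^sub>v v"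
    proof (rule eq_vecI)
      fix i assume "i < dim_vec (Ag * S *\<^sub>v v)"
      moreover have "((Af *\<^sub>v b + bf) + (Af * S) *\<^sub>v v) $ i = ((Af *\<^sub>v b + bf) + (Ag * S) *\<^sub>v v) $ i"
        using on_S[OF v] mean by simp
      ultimately show "(Af * S *\<^sub>v v) $ i = (Ag * S *\<^sub>v v) $ i" using Af Ag S bf b by simp
    qed (use Af Ag S in simp)
  qed (use Af Ag S in auto)
  with mean show "Af *\<^sub>v b + bf = Ag *\<^sub>v b + bg \<and> Af * S = Ag * S" ..
next
  assume "Af *\<^sub>v b + bf = Ag *\<^sub>v b + bg \<and> Af * S = Ag * S"
  then show "\<forall>w\<in>g_supp n (A, b, S). Af *\<^sub>v w + bf = Ag *\<^sub>v w + bg"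
    unfolding g_supp_def by (auto simp: affine_map_at_translate[OF Af bf b S]
        affine_map_at_translate[OF Ag bg b S])
qed

lemma g_ae_eq_iff_agree_on_supp:
  assumes \<mu>: "g_morph 0 n \<mu>" and f: "g_morph n y (Af, bf, Sf)" and g: "g_morph n y (Ag, bg, Sg)"
  shows "g_ae_eq n y \<mu> (Af, bf, Sf) (Ag, bg, Sg) \<longleftrightarrow>
     (\<forall>w\<in>g_supp n \<mu>. Af *\<^sub>v w + bf = Ag *\<^sub>v w + bg) \<and> Sf = Sg"
proof -
  obtain A b S where \<mu>_eq: "\<mu> = (A, b, S)" by (cases \<mu>)
  have "A \<in> carrier_mat n 0" "b \<in> carrier_vec n" "S \<in> carrier_mat n n" "transpose_mat S = S"
    using \<mu> unfolding \<mu>_eq g_morph_def psd_mat_def by auto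
  moreover have "Af \<in> carrier_mat y n" "bf \<in> carrier_vec y" "Sf \<in> carrier_mat y y"
    "Ag \<in> carrier_mat y n" "bg \<in> carrier_vec y" "Sg \<in> carrier_mat y y"
    using f g unfolding g_morph_def psd_mat_def by auto
  ultimately show ?thesis
    unfolding \<mu>_eq by (simp add: g_ae_eq_iff_params affine_maps_agree_on_g_supp_iff)
qed

lemma g_ac_if_supp_subset:
  assumes \<mu>: "g_morph 0 n \<mu>" and \<nu>: "g_morph 0 n \<nu>" and sub: "g_supp n \<mu> \<subseteq> g_supp n \<nu>"
  shows "g_ac n \<mu> \<nu>"
  unfolding g_ac_def
proof (intro allI impI)
  fix y f g assume f: "g_morph n y f" and g: "g_morph n y g" and eq\<nu>: "g_ae_eq n y \<nu> f g"
  obtain Af bf Sf Ag bg Sg where fg: "f = (Af, bf, Sf)" "g = (Ag, bg, Sg)" by (cases f, cases g)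
  note agree = g_ae_eq_iff_agree_on_supp[OF _ f[unfolded fg(1)] g[unfolded fg(2)]]
  show "g_ae_eq n y \<mu> f g"
    using eq\<nu> sub unfolding fg agree[OF \<mu>] agree[OF \<nu>] by blast
qed

lemma mem_g_supp_iff:
  assumes "b \<in> carrier_vec n" and "S \<in> carrier_mat n n"
  shows "x \<in> g_supp n (A, b, S) \<longleftrightarrow> x \<in> carrier_vec n \<and> (\<exists>u\<in>carrier_vec n. x - b = S *\<^sub>v u)"
proof
  assume "x \<in> g_supp n (A, b, S)"
  then obtain u where "u \<in> carrier_vec n" "x = b + S *\<^sub>v u" unfolding g_supp_def by auto
  moreover from this have "x - b = S *\<^sub>v u" using assms by (intro eq_vecI) auto
  ultimately show "x \<in> carrier_vec n \<and> (\<exists>u\<in>carrier_vec n. x - b = S *\<^sub>v u)" using assms by auto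
next
  assume "x \<in> carrier_vec n \<and> (\<exists>u\<in>carrier_vec n. x - b = S *\<^sub>v u)"
  then obtain u where x: "x \<in> carrier_vec n" and "u \<in> carrier_vec n" "x - b = S *\<^sub>v u" by blast
  moreover have "x = b + (x - b)" using x assms by (intro eq_vecI) auto
  ultimately show "x \<in> g_supp n (A, b, S)" unfolding g_supp_def by auto
qed

lemma psd_mat_zero: "psd_mat n (0\<^sub>m n n :: real mat)"
  unfolding psd_mat_def by (auto simp: mult_mat_vec_def scalar_prod_def)

text \<open>The deterministic map \<open>x \<mapsto> d \<bullet> (x - b)\<close> as a morphism \<open>n \<rightarrow> 1\<close>.\<close>

definition affine_functional :: "nat \<Rightarrow> real vec \<Rightarrow> real vec \<Rightarrow> gmor" where
  "affine_functional n d b = (mat 1 n (\<lambda>(i, j). d $ j), vec 1 (\<lambda>_. - (d \<bullet> b)), 0\<^sub>m 1 1)"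

lemma g_morph_affine_functional: "g_morph n 1 (affine_functional n d b)"
  unfolding affine_functional_def g_morph_def by (simp add: psd_mat_zero)

lemma g_morph_zero: "g_morph n m (0\<^sub>m m n, 0\<^sub>v m, 0\<^sub>m m m)"
  unfolding g_morph_def by (simp add: psd_mat_zero)

lemma g_ae_eq_affine_functional_zero_iff:
  assumes \<mu>: "g_morph 0 n \<mu>" and d: "d \<in> carrier_vec n" and b: "b \<in> carrier_vec n"
  shows "g_ae_eq n 1 \<mu> (affine_functional n d b) (0\<^sub>m 1 n, 0\<^sub>v 1, 0\<^sub>m 1 1)
    \<longleftrightarrow> (\<forall>x\<in>g_supp n \<mu>. d \<bullet> (x - b) = 0)"
proof -
  let ?F = "mat 1 n (\<lambda>(i, j). d $ j) :: real mat" and ?c = "vec 1 (\<lambda>_. - (d \<bullet> b)) :: real vec"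
  have agree_iff: "?F *\<^sub>v x + ?c = 0\<^sub>m 1 n *\<^sub>v x + 0\<^sub>v 1 \<longleftrightarrow> d \<bullet> (x - b) = 0"
    if x: "x \<in> carrier_vec n" for x
  proof -
    have "(?F *\<^sub>v x) $ 0 = d \<bullet> x" using x d by (simp add: mult_mat_vec_def scalar_prod_def)
    then have "(?F *\<^sub>v x + ?c) $ 0 = d \<bullet> (x - b)"
      by (simp add: scalar_prod_minus_distrib[OF d x b])
    moreover have "?F *\<^sub>v x + ?c \<in> carrier_vec 1" unfolding carrier_vec_def by simp
    moreover have "0\<^sub>m 1 n *\<^sub>v x + 0\<^sub>v 1 \<in> carrier_vec 1"
      using x by (auto intro!: add_carrier_vec mult_mat_vec_carrier)
    moreover have "u = v \<longleftrightarrow> u $ 0 = v $ 0" if "u \<in> carrier_vec 1" "v \<in> carrier_vec 1" for u v :: "real vec"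
      using that by (auto intro!: eq_vecI)
    ultimately show ?thesis using x by simp
  qed
  obtain A' b' S' where \<mu>_eq: "\<mu> = (A', b', S')" by (cases \<mu>)
  have "g_supp n \<mu> \<subseteq> carrier_vec n"
    using \<mu> mem_g_supp_iff unfolding \<mu>_eq g_morph_def psd_mat_def by auto
  then show ?thesis
    using g_ae_eq_iff_agree_on_supp[OF \<mu> g_morph_affine_functional[of n d b, unfolded affine_functional_def]
        g_morph_zero] agree_iff unfolding affine_functional_def by auto
qed

text \<open>If \<open>p \<in> supp \<mu>\<close> lies outside \<open>supp \<nu> = b + col S\<close>, a functional \<open>d\<close> that vanishes on
  \<open>col S\<close> but not at \<open>p - b\<close> gives the map \<open>x \<mapsto> d \<bullet> (x - b)\<close>, which is \<open>\<nu>\<close>-a.e. but not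
  \<open>\<mu>\<close>-a.e. equal to \<open>0\<close>.\<close>

lemma g_supp_subset_if_g_ac:
  assumes \<mu>: "g_morph 0 n \<mu>" and \<nu>: "g_morph 0 n \<nu>" and ac: "g_ac n \<mu> \<nu>"
  shows "g_supp n \<mu> \<subseteq> g_supp n \<nu>"
proof
  fix p assume p\<mu>: "p \<in> g_supp n \<mu>"
  obtain A1 b1 S1 A b S where \<mu>\<nu>: "\<mu> = (A1, b1, S1)" "\<nu> = (A, b, S)" by (cases \<mu>, cases \<nu>)
  have b1: "b1 \<in> carrier_vec n" and S1: "S1 \<in> carrier_mat n n"
    and b: "b \<in> carrier_vec n" and S: "S \<in> carrier_mat n n"
    using \<mu> \<nu> unfolding \<mu>\<nu> g_morph_def psd_mat_def by auto
  have p: "p \<in> carrier_vec n" using p\<mu> mem_g_supp_iff[OF b1 S1] unfolding \<mu>\<nu> by auto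
  show "p \<in> g_supp n \<nu>"
  proof (rule ccontr)
    assume "p \<notin> g_supp n \<nu>"
    then have "\<forall>u\<in>carrier_vec n. p - b \<noteq> S *\<^sub>v u" using p mem_g_supp_iff[OF b S] unfolding \<mu>\<nu> by auto
    moreover have "p - b \<in> carrier_vec n" using p b by simp
    ultimately obtain d where d: "d \<in> carrier_vec n" "\<forall>u\<in>carrier_vec n. d \<bullet> (S *\<^sub>v u) = 0"
      "d \<bullet> (p - b) \<noteq> 0"
      using separating_functional_outside_range[OF S] by blast
    have "\<forall>x\<in>g_supp n \<nu>. d \<bullet> (x - b) = 0" using d(2) mem_g_supp_iff[OF b S] unfolding \<mu>\<nu> by auto
    then have "g_ae_eq n 1 \<nu> (affine_functional n d b) (0\<^sub>m 1 n, 0\<^sub>v 1, 0\<^sub>m 1 1)"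
      using g_ae_eq_affine_functional_zero_iff[OF \<nu> d(1) b] by blast
    then have "g_ae_eq n 1 \<mu> (affine_functional n d b) (0\<^sub>m 1 n, 0\<^sub>v 1, 0\<^sub>m 1 1)"
      using ac g_morph_affine_functional g_morph_zero unfolding g_ac_def by blast
    then show False using g_ae_eq_affine_functional_zero_iff[OF \<mu> d(1) b] p\<mu> d(3) by blast
  qed
qed

lemma g_ac_iff_supp_subset:
  assumes "g_morph 0 n \<mu>" and "g_morph 0 n \<nu>"
  shows "g_ac n \<mu> \<nu> \<longleftrightarrow> g_supp n \<mu> \<subseteq> g_supp n \<nu>"
  using g_ac_if_supp_subset[OF assms] g_supp_subset_if_g_ac[OF assms] by blast

theorem proposition4p10:
  shows "(\<forall>(X::'a set) \<mu> \<nu>. finite X \<longrightarrow> fs_morph {()} X \<mu> \<longrightarrow> fs_morph {()} X \<nu> \<longrightarrow>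
            (fs_ac X \<mu> \<nu> \<longleftrightarrow> (\<forall>x\<in>X. \<nu> () x = 0 \<longrightarrow> \<mu> () x = 0)))
       \<and> (\<forall>(X::'b measure) \<mu> \<nu>. standard_borel X \<longrightarrow> bs_state X \<mu> \<longrightarrow> bs_state X \<nu> \<longrightarrow>
            (bs_ac X \<mu> \<nu> \<longleftrightarrow> (\<forall>A\<in>sets X. emeasure \<nu> A = 0 \<longrightarrow> emeasure \<mu> A = 0)))
       \<and> (\<forall>n \<mu> \<nu>. g_morph 0 n \<mu> \<longrightarrow> g_morph 0 n \<nu> \<longrightarrow>
            (g_ac n \<mu> \<nu> \<longleftrightarrow> g_supp n \<mu> \<subseteq> g_supp n \<nu>))
       \<and> (\<forall>(X::'c set) R S. R \<noteq> {} \<longrightarrow> R \<subseteq> X \<longrightarrow> S \<noteq> {} \<longrightarrow> S \<subseteq> X \<longrightarrow>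
            (rp_ac X R S \<longleftrightarrow> R \<subseteq> S))"
  by (intro conjI allI impI)
    (simp_all add: fs_ac_iff_zero_imp_zero bs_ac_iff_null_sets g_ac_iff_supp_subset rp_ac_iff_subset)
end
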